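(* Let $\mathbf L\in\mathbb R^{n\times n}$ be positive semidefinite, $\mathcal D,\mathbf W$ a dictionary with positive weights, $\alpha>0$, $r\geq 1$, and let $l_i$, $\widehat{\mathbf L}$, $\tilde s$ be as in the context; assume $l_i>0$ for all $i\in[n]$ and set $\tilde d=\sum_{i=1}^n l_i$. Let $t\sim\mathrm{Poisson}(re^{1/r}\tilde d)$ and conditionally on $t$ let $\sigma=(\sigma_1,\dots,\sigma_t)$ be i.i.d. with $\Pr(\sigma_j=i)=l_i/\tilde d$; define $[\widetilde{\mathbf L}_\sigma]_{ab}=\frac{\mathbf L_{\sigma_a\sigma_b}}{r\sqrt{l_{\sigma_a}l_{\sigma_b}}}$. Then $$\mathbb E_{t,\sigma}\!\left[\frac{e^{\tilde s}\det(\mathbf I+\alpha\widetilde{\mathbf L}_\sigma)}{e^{t/r}\det(\mathbf I+\alpha\widehat{\mathbf L})}\right]=\exp\big(\tilde s+r\tilde d-re^{1/r}\tilde d\big)\,\frac{\det(\mathbf I+\alpha\mathbf L)}{\det(\mathbf I+\alpha\widehat{\mathbf L})}.$$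
   Context: A dictionary is a sequence $\mathcal D=(\mathcal D_1,\dots,\mathcal D_m)$ of elements of $[n]=\{1,\dots,n\}$, with a diagonal matrix $\mathbf W\in\mathbb R^{m\times m}$ of strictly positive weights. For index sequences $A,B$, $\mathbf L_{A,B}$ denotes the submatrix with rows indexed by $A$ and columns by $B$ (with repetitions allowed). The approximate marginals are $$l_i=\alpha\Big(\mathbf L_{ii}-\alpha\,\mathbf L_{\{i\},\mathcal D}\big(\alpha\mathbf L_{\mathcal D,\mathcal D}+\mathbf W^{-1}\big)^{-1}\mathbf L_{\mathcal D,\{i\}}\Big),\qquad i\in[n].$$ Further, $\widehat{\mathbf L}=\mathbf W^{1/2}\mathbf L_{\mathcal D,\mathcal D}\mathbf W^{1/2}\in\mathbb R^{m\times m}$ and $\tilde s=d_{\mathrm{eff}}(\alpha\widehat{\mathbf L})=\mathrm{tr}\big(\alpha\widehat{\mathbf L}(\alpha\widehat{\mathbf L}+\mathbf I)^{-1}\big)$. The determinant of a $0\times0$ matrix is $1$. *)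

theory Defs
  imports "Jordan_Normal_Form.Gauss_Jordan_Elimination" "Jordan_Normal_Form.Determinant"
          "HOL-Probability.Probability_Mass_Function"
begin

text \<open>Matrices are JNF matrices (type real mat) with explicit dimensions; indices are 0-based,
  so [n] is rendered as {0..<n}.\<close>

definition submat_idx :: "real mat \<Rightarrow> nat list \<Rightarrow> nat list \<Rightarrow> real mat" where
  "submat_idx L A B = Matrix.mat (length A) (length B) (\<lambda>(i, j). L $$ (A ! i, B ! j))"

definition psd_mat :: "nat \<Rightarrow> real mat \<Rightarrow> bool" where
  "psd_mat n L \<longleftrightarrow> L \<in> carrier_mat n n \<and> transpose_mat L = L \<and>
     (\<forall>x \<in> carrier_vec n. 0 \<le> scalar_prod x (L *\<^sub>v x))"

definition diag_list :: "real list \<Rightarrow> real mat" where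
  "diag_list w = Matrix.mat (length w) (length w) (\<lambda>(i, j). if i = j then w ! i else 0)"

definition W_mat :: "real list \<Rightarrow> real mat" where
  "W_mat w = diag_list w"

definition W_inv :: "real list \<Rightarrow> real mat" where
  "W_inv w = diag_list (map (\<lambda>x. 1 / x) w)"

definition W_sqrt :: "real list \<Rightarrow> real mat" where
  "W_sqrt w = diag_list (map sqrt w)"

definition mat_inv :: "real mat \<Rightarrow> real mat" where
  "mat_inv M = the (mat_inverse M)"

definition trace_mat :: "real mat \<Rightarrow> real" where
  "trace_mat M = (\<Sum>i < dim_row M. M $$ (i, i))"

definition approx_marginal :: "real mat \<Rightarrow> nat list \<Rightarrow> real list \<Rightarrow> real \<Rightarrow> nat \<Rightarrow> real" where
  "approx_marginal L D w \<alpha> i =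
     \<alpha> * (L $$ (i, i) - \<alpha> * (submat_idx L [i] D
        * mat_inv (\<alpha> \<cdot>\<^sub>m submat_idx L D D + W_inv w)
        * submat_idx L D [i]) $$ (0, 0))"

definition L_hat :: "real mat \<Rightarrow> nat list \<Rightarrow> real list \<Rightarrow> real mat" where
  "L_hat L D w = W_sqrt w * submat_idx L D D * W_sqrt w"

definition d_eff :: "real mat \<Rightarrow> real" where
  "d_eff M = trace_mat (M * mat_inv (M + 1\<^sub>m (dim_row M)))"

definition L_tilde :: "real mat \<Rightarrow> (nat \<Rightarrow> real) \<Rightarrow> real \<Rightarrow> nat list \<Rightarrow> real mat" where
  "L_tilde L l r \<sigma> = Matrix.mat (length \<sigma>) (length \<sigma>)
     (\<lambda>(a, b). L $$ (\<sigma> ! a, \<sigma> ! b) / (r * sqrt (l (\<sigma> ! a) * l (\<sigma> ! b))))"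

definition poisson_then_iid :: "real \<Rightarrow> 'a pmf \<Rightarrow> (nat \<times> 'a list) pmf" where
  "poisson_then_iid rate p =
     bind_pmf (poisson_pmf rate) (\<lambda>t. map_pmf (\<lambda>\<sigma>. (t, \<sigma>)) (replicate_pmf t p))"

end

theory Submission
  imports Defs
begin

text \<open>Write \<open>L_tilde L l r \<sigma> = S * L * S\<^sup>T\<close>, where row \<open>a\<close> of the sketching matrix \<open>S\<close> is the
  unit vector at \<open>\<sigma> ! a\<close> divided by \<open>sqrt (r * l (\<sigma> ! a))\<close>. Sylvester's identity turns
  \<open>det (I + \<alpha> S L S\<^sup>T)\<close> into \<open>det (I + \<alpha> L S\<^sup>T S)\<close>, and \<open>S\<^sup>T S\<close> is diagonal with entries
  \<open>N j / (r * l j)\<close>, where \<open>N j\<close> is the number of occurrences of \<open>j\<close> in \<open>\<sigma>\<close>. The determinant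
  is therefore affine in each count separately, a sum over \<open>X\<close> of \<open>g X\<close> times the product of the
  \<open>N j\<close> for \<open>j \<notin> X\<close>. For such products the factorial moments of i.i.d. sample counts, summed
  against the Poisson weights, give \<open>E[z^t * \<Prod>j\<in>Y. N j] = exp (\<lambda> z - \<lambda>) * \<Prod>j\<in>Y. \<lambda> z q j\<close>.
  With \<open>z = exp (-1/r)\<close> and \<open>\<lambda> = r exp (1/r) d\<close> each \<open>N j\<close> is replaced by \<open>r * l j\<close>, and the
  polynomial reassembles \<open>det (I + \<alpha> L)\<close>.\<close>

section \<open>Moments of Poissonized sample counts\<close>

lemma prod_count_list_Cons:
  assumes "finite S"
  shows "(\<Prod>i\<in>S. real (count_list (x # xs) i))
       = (\<Prod>i\<in>S. real (count_list xs i)) + (if x \<in> S then \<Prod>i\<in>S - {x}. real (count_list xs i) else 0)"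
proof (cases "x \<in> S")
  case True
  have "(\<Prod>i\<in>S - {x}. real (count_list (x # xs) i)) = (\<Prod>i\<in>S - {x}. real (count_list xs i))"
    by (intro prod.cong) auto
  then show ?thesis
    using True assms by (simp add: prod.remove algebra_simps)
qed (auto intro!: prod.cong)

lemma choose_fact_Suc:
  "real (t choose k) * fact k + real k * (real (t choose (k - 1)) * fact (k - 1))
   = real (Suc t choose k) * fact k"
  by (cases k) (simp_all add: algebra_simps)

lemma nn_integral_replicate_pmf_prod_count_list:
  assumes "finite S"
  shows "(\<integral>\<^sup>+xs. ennreal (\<Prod>i\<in>S. real (count_list xs i)) \<partial>replicate_pmf t q)
       = ennreal (real (t choose card S) * fact (card S) * (\<Prod>i\<in>S. pmf q i))"
  using assms
proof (induction t arbitrary: S)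
  case 0
  then show ?case
    by (cases "S = {}") (simp_all add: binomial_eq_0 card_gt_0_iff)
next
  case (Suc t)
  define M where "M S = real (t choose card S) * fact (card S) * (\<Prod>i\<in>S. pmf q i)" for S
  have M_nonneg: "0 \<le> M S" for S
    unfolding M_def by (intro mult_nonneg_nonneg prod_nonneg) auto
  have removed: "M (S - {x}) * pmf q x = real (t choose (card S - 1)) * fact (card S - 1) * (\<Prod>i\<in>S. pmf q i)"
    if "x \<in> S" for x
    using that Suc.prems by (simp add: M_def prod.remove[of S x "pmf q"] algebra_simps)
  have "(\<integral>\<^sup>+xs. ennreal (\<Prod>i\<in>S. real (count_list xs i)) \<partial>replicate_pmf (Suc t) q)
      = (\<integral>\<^sup>+x. \<integral>\<^sup>+xs. ennreal (\<Prod>i\<in>S. real (count_list (x # xs) i)) \<partial>replicate_pmf t q \<partial>q)"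
    by (simp add: nn_integral_return del: count_list.simps)
  also have "\<dots> = (\<integral>\<^sup>+x. \<integral>\<^sup>+xs. ennreal (\<Prod>i\<in>S. real (count_list xs i))
          + ennreal (if x \<in> S then \<Prod>i\<in>S - {x}. real (count_list xs i) else 0) \<partial>replicate_pmf t q \<partial>q)"
    unfolding prod_count_list_Cons[OF Suc.prems] by (intro nn_integral_cong ennreal_plus) (auto intro: prod_nonneg)
  also have "\<dots> = (\<integral>\<^sup>+x. ennreal (M S) + ennreal (if x \<in> S then M (S - {x}) else 0) \<partial>q)"
    using Suc.prems by (intro nn_integral_cong) (simp add: nn_integral_add Suc.IH M_def)
  also have "\<dots> = ennreal (M S) + (\<Sum>x\<in>S. ennreal (M (S - {x})) * ennreal (pmf q x))"
    using Suc.prems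
    by (simp add: nn_integral_add M_nonneg nn_integral_measure_pmf_support[where A = S])
  also have "\<dots> = ennreal (M S) + ennreal (\<Sum>x\<in>S. M (S - {x}) * pmf q x)"
    by (simp add: ennreal_mult[symmetric] M_nonneg)
  also have "(\<Sum>x\<in>S. M (S - {x}) * pmf q x)
      = real (card S) * (real (t choose (card S - 1)) * fact (card S - 1) * (\<Prod>i\<in>S. pmf q i))"
    by (simp add: removed)
  also have "ennreal (M S) + ennreal \<dots> = ennreal (M S + \<dots>)"
    by (rule ennreal_plus[symmetric]) (auto intro!: M_nonneg mult_nonneg_nonneg prod_nonneg)
  also have "M S + real (card S) * (real (t choose (card S - 1)) * fact (card S - 1) * (\<Prod>i\<in>S. pmf q i))
      = (real (t choose card S) * fact (card S)
          + real (card S) * (real (t choose (card S - 1)) * fact (card S - 1))) * (\<Prod>i\<in>S. pmf q i)"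
    by (simp add: M_def algebra_simps)
  also have "\<dots> = real (Suc t choose card S) * fact (card S) * (\<Prod>i\<in>S. pmf q i)"
    by (simp only: choose_fact_Suc)
  finally show ?case .
qed

lemma sums_poisson_choose_moment:
  fixes lam z P :: real
  shows "(\<lambda>t. lam ^ t / fact t * exp (- lam) * (z ^ t * (real (t choose k) * fact k * P)))
           sums (exp (lam * z - lam) * (lam * z) ^ k * P)"
proof -
  let ?f = "\<lambda>t. lam ^ t / fact t * exp (- lam) * (z ^ t * (real (t choose k) * fact k * P))"
  have shifted: "?f (i + k) = exp (- lam) * (lam * z) ^ k * P * ((lam * z) ^ i / fact i)" for i
  proof -
    have "fact k * fact i * real ((i + k) choose k) = (fact (i + k) :: real)"
      using binomial_fact_lemma[of k "i + k"] by (metis add_diff_cancel_right' le_add2 of_nat_fact of_nat_mult)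
    then show ?thesis
      by (simp add: power_add power_mult_distrib field_simps)
  qed
  have "(\<lambda>i. (lam * z) ^ i / fact i) sums exp (lam * z)"
    using exp_converges[of "lam * z"] by (simp add: divide_inverse mult.commute)
  then have "(\<lambda>i. ?f (i + k)) sums (exp (- lam) * (lam * z) ^ k * P * exp (lam * z))"
    unfolding shifted by (rule sums_mult)
  then have "?f sums (exp (- lam) * (lam * z) ^ k * P * exp (lam * z))"
    by (rule sums_zero_iff_shift[THEN iffD1, rotated]) (simp add: binomial_eq_0)
  then show ?thesis
    by (simp add: exp_diff exp_minus field_simps)
qed

lemma has_bochner_integral_poisson_then_iid_prod_count_list:
  assumes S: "finite S" and lam: "0 < lam" and z: "0 \<le> z"
  shows "has_bochner_integral (poisson_then_iid lam q)
           (\<lambda>(t, xs). z ^ t * (\<Prod>i\<in>S. real (count_list xs i)))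
           (exp (lam * z - lam) * (lam * z) ^ card S * (\<Prod>i\<in>S. pmf q i))"
proof (rule has_bochner_integral_nn_integral)
  define P where "P = (\<Prod>i\<in>S. pmf q i)"
  have P: "0 \<le> P"
    unfolding P_def by (intro prod_nonneg) auto
  show "0 \<le> exp (lam * z - lam) * (lam * z) ^ card S * (\<Prod>i\<in>S. pmf q i)"
    using P lam z by (simp add: P_def)
  show "AE x in poisson_then_iid lam q. 0 \<le> (case x of (t, xs) \<Rightarrow> z ^ t * (\<Prod>i\<in>S. real (count_list xs i)))"
    using z by (auto intro!: mult_nonneg_nonneg prod_nonneg)
  have "(\<integral>\<^sup>+x. ennreal (case x of (t, xs) \<Rightarrow> z ^ t * (\<Prod>i\<in>S. real (count_list xs i))) \<partial>poisson_then_iid lam q)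
      = (\<integral>\<^sup>+t. ennreal (z ^ t) * \<integral>\<^sup>+xs. ennreal (\<Prod>i\<in>S. real (count_list xs i)) \<partial>replicate_pmf t q \<partial>poisson_pmf lam)"
    unfolding poisson_then_iid_def
    using z by (simp add: nn_integral_map_pmf ennreal_mult nn_integral_cmult prod_nonneg)
  also have "\<dots> = (\<integral>\<^sup>+t. ennreal (z ^ t * (real (t choose card S) * fact (card S) * P)) \<partial>poisson_pmf lam)"
    using z P by (simp add: nn_integral_replicate_pmf_prod_count_list[OF S] ennreal_mult P_def)
  also have "\<dots> = (\<Sum>t. ennreal (lam ^ t / fact t * exp (- lam) * (z ^ t * (real (t choose card S) * fact (card S) * P))))"
    unfolding nn_integral_measure_pmf nn_integral_count_space_nat
    using lam z P by (intro suminf_cong) (simp add: pmf_poisson[OF lam] ennreal_mult[symmetric])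
  also have "\<dots> = ennreal (exp (lam * z - lam) * (lam * z) ^ card S * P)"
    using lam z P by (intro suminf_ennreal_eq sums_poisson_choose_moment) auto
  finally show "(\<integral>\<^sup>+x. ennreal (case x of (t, xs) \<Rightarrow> z ^ t * (\<Prod>i\<in>S. real (count_list xs i))) \<partial>poisson_then_iid lam q)
      = ennreal (exp (lam * z - lam) * (lam * z) ^ card S * (\<Prod>i\<in>S. pmf q i))"
    by (simp add: P_def)
qed simp

lemma expectation_poisson_then_iid_multiaffine:
  fixes g :: "'a set \<Rightarrow> real"
  assumes A: "finite A" and lam: "0 < lam" and z: "0 \<le> z"
  shows "measure_pmf.expectation (poisson_then_iid lam q)
           (\<lambda>(t, xs). z ^ t * (\<Sum>X\<in>Pow A. g X * (\<Prod>j\<in>A - X. real (count_list xs j))))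
         = exp (lam * z - lam) * (\<Sum>X\<in>Pow A. g X * (\<Prod>j\<in>A - X. lam * z * pmf q j))"
proof -
  have "(\<lambda>(t, xs). z ^ t * (\<Sum>X\<in>Pow A. g X * (\<Prod>j\<in>A - X. real (count_list xs j))))
      = (\<lambda>x. \<Sum>X\<in>Pow A. g X * (case x of (t, xs) \<Rightarrow> z ^ t * (\<Prod>j\<in>A - X. real (count_list xs j))))"
    by (auto simp: sum_distrib_left mult_ac)
  moreover have "has_bochner_integral (poisson_then_iid lam q)
      (\<lambda>x. \<Sum>X\<in>Pow A. g X * (case x of (t, xs) \<Rightarrow> z ^ t * (\<Prod>j\<in>A - X. real (count_list xs j))))
      (\<Sum>X\<in>Pow A. g X * (exp (lam * z - lam) * (lam * z) ^ card (A - X) * (\<Prod>j\<in>A - X. pmf q j)))"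
    using A lam z
    by (intro has_bochner_integral_sum has_bochner_integral_mult_right
        has_bochner_integral_poisson_then_iid_prod_count_list) auto
  ultimately have "measure_pmf.expectation (poisson_then_iid lam q)
      (\<lambda>(t, xs). z ^ t * (\<Sum>X\<in>Pow A. g X * (\<Prod>j\<in>A - X. real (count_list xs j))))
      = (\<Sum>X\<in>Pow A. g X * (exp (lam * z - lam) * (lam * z) ^ card (A - X) * (\<Prod>j\<in>A - X. pmf q j)))"
    by (simp add: has_bochner_integral_integral_eq)
  then show ?thesis
    using A by (simp add: sum_distrib_left prod.distrib power_mult_distrib mult_ac)
qed

section \<open>Determinant identities\<close>

lemma det_one_plus_mult_commute:
  fixes U V :: "'a :: idom mat"
  assumes U: "U \<in> carrier_mat t n" and V: "V \<in> carrier_mat n t"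
  shows "Determinant.det (1\<^sub>m t + U * V) = Determinant.det (1\<^sub>m n + V * U)"
proof -
  define X where "X = four_block_mat (1\<^sub>m t) (- U) V (1\<^sub>m n)"
  define R where "R = four_block_mat (1\<^sub>m t) U (0\<^sub>m n t) (1\<^sub>m n)"
  have X: "X \<in> carrier_mat (t + n) (t + n)" and R: "R \<in> carrier_mat (t + n) (t + n)"
    unfolding X_def R_def using U V by auto
  have UV: "U * V \<in> carrier_mat t t" and VU: "V * U \<in> carrier_mat n n"
    using U V by auto
  have det_R: "Determinant.det R = 1"
    unfolding R_def by (subst det_four_block_mat_lower_left_zero[where n = t and m = n]) (use U in auto)
  have "X * R = four_block_mat (1\<^sub>m t) (0\<^sub>m t n) V (V * U + 1\<^sub>m n)"
    and "R * X = four_block_mat (1\<^sub>m t + U * V) (0\<^sub>m t n) V (1\<^sub>m n)"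
    unfolding X_def R_def using U V
    by (subst mult_four_block_mat[where ?nr1.0 = t and ?n1.0 = t and ?n2.0 = n and ?nr2.0 = n
          and ?nc1.0 = t and ?nc2.0 = n]; auto simp: uminus_l_inv_mat)+
  then have "Determinant.det X = Determinant.det (V * U + 1\<^sub>m n)"
    and "Determinant.det X = Determinant.det (1\<^sub>m t + U * V)"
    using det_mult[OF X R] det_mult[OF R X] det_R
    by (auto simp: det_four_block_mat_upper_right_zero[where n = t and m = n] U V UV VU)
  then show ?thesis
    using VU by (metis comm_add_mat one_carrier_mat)
qed

lemma det_affine_columns_multiaffine:
  fixes a b :: "nat \<Rightarrow> nat \<Rightarrow> 'a :: comm_ring_1"
  obtains g where "\<And>x. Determinant.det (Matrix.mat n n (\<lambda>(i, j). a i j + b i j * x j))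
                     = (\<Sum>X\<in>Pow {0..<n}. g X * (\<Prod>j\<in>{0..<n} - X. x j))"
proof
  let ?A = "{0..<n}"
  define c where "c p X = signof p * (\<Prod>j\<in>X. a (inv_into UNIV p j) j) * (\<Prod>j\<in>?A - X. b (inv_into UNIV p j) j)" for p X
  fix x :: "nat \<Rightarrow> 'a"
  let ?M = "Matrix.mat n n (\<lambda>(i, j). a i j + b i j * x j)"
  have expand: "signof p * (\<Prod>i = 0..<n. ?M $$ (i, p i)) = (\<Sum>X\<in>Pow ?A. c p X * (\<Prod>j\<in>?A - X. x j))"
    if p: "p permutes ?A" for p
  proof -
    have "(\<Prod>i = 0..<n. ?M $$ (i, p i)) = (\<Prod>i\<in>?A. (\<lambda>j i. a i j + b i j * x j) (p i) i)"
      using permutes_in_image[OF p] by (intro prod.cong) auto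
    also have "\<dots> = (\<Prod>j\<in>?A. a (inv_into UNIV p j) j + b (inv_into UNIV p j) j * x j)"
      by (rule prod.permutes_inv[OF p])
    also have "\<dots> = (\<Sum>X\<in>Pow ?A. (\<Prod>j\<in>X. a (inv_into UNIV p j) j) * (\<Prod>j\<in>?A - X. b (inv_into UNIV p j) j * x j))"
      by (rule prod_add) simp
    finally show ?thesis
      unfolding c_def by (simp add: sum_distrib_left prod.distrib mult_ac)
  qed
  have "Determinant.det ?M = (\<Sum>p | p permutes ?A. signof p * (\<Prod>i = 0..<n. ?M $$ (i, p i)))"
    by (rule det_def') simp
  also have "\<dots> = (\<Sum>p | p permutes ?A. \<Sum>X\<in>Pow ?A. c p X * (\<Prod>j\<in>?A - X. x j))"
    by (intro sum.cong refl expand) simp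
  also have "\<dots> = (\<Sum>X\<in>Pow ?A. (\<Sum>p | p permutes ?A. c p X) * (\<Prod>j\<in>?A - X. x j))"
    by (subst sum.swap) (simp add: sum_distrib_right)
  finally show "Determinant.det ?M = (\<Sum>X\<in>Pow ?A. (\<Sum>p | p permutes ?A. c p X) * (\<Prod>j\<in>?A - X. x j))" .
qed

section \<open>The sketched kernel\<close>

lemma count_list_eq_sum_nth:
  "real (count_list xs x) = (\<Sum>a<length xs. if xs ! a = x then 1 else 0)"
  by (induction xs) (simp_all add: sum.lessThan_Suc_shift del: sum.lessThan_Suc)

definition sketch_mat :: "(nat \<Rightarrow> real) \<Rightarrow> real \<Rightarrow> nat \<Rightarrow> nat list \<Rightarrow> real mat" where
  "sketch_mat l r n \<sigma> = Matrix.mat (length \<sigma>) n (\<lambda>(a, j). if \<sigma> ! a = j then 1 / sqrt (r * l j) else 0)"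

lemma sketch_mat_carrier: "sketch_mat l r n \<sigma> \<in> carrier_mat (length \<sigma>) n"
  by (simp add: sketch_mat_def)

lemma sketch_mat_mult_index:
  assumes M: "M \<in> carrier_mat n m" and \<sigma>: "set \<sigma> \<subseteq> {..<n}" and a: "a < length \<sigma>" and k: "k < m"
  shows "(sketch_mat l r n \<sigma> * M) $$ (a, k) = M $$ (\<sigma> ! a, k) / sqrt (r * l (\<sigma> ! a))"
proof -
  have "(sketch_mat l r n \<sigma> * M) $$ (a, k)
      = (\<Sum>j\<in>{0..<n}. (if \<sigma> ! a = j then 1 / sqrt (r * l j) else 0) * M $$ (j, k))"
    using M a k by (simp add: sketch_mat_def scalar_prod_def)
  also have "\<dots> = (\<Sum>j\<in>{0..<n}. if \<sigma> ! a = j then M $$ (j, k) / sqrt (r * l j) else 0)"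
    by (intro sum.cong) auto
  finally show ?thesis
    using \<sigma> nth_mem[OF a] by (auto simp: sum.delta)
qed

lemma mult_transpose_sketch_mat_index:
  assumes M: "M \<in> carrier_mat m n" and \<sigma>: "set \<sigma> \<subseteq> {..<n}" and i: "i < m" and b: "b < length \<sigma>"
  shows "(M * transpose_mat (sketch_mat l r n \<sigma>)) $$ (i, b) = M $$ (i, \<sigma> ! b) / sqrt (r * l (\<sigma> ! b))"
proof -
  have "(M * transpose_mat (sketch_mat l r n \<sigma>)) $$ (i, b)
      = (\<Sum>j\<in>{0..<n}. M $$ (i, j) * (if \<sigma> ! b = j then 1 / sqrt (r * l j) else 0))"
    using M i b by (simp add: sketch_mat_def scalar_prod_def)
  also have "\<dots> = (\<Sum>j\<in>{0..<n}. if \<sigma> ! b = j then M $$ (i, j) / sqrt (r * l j) else 0)"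
    by (intro sum.cong) auto
  finally show ?thesis
    using \<sigma> nth_mem[OF b] by (auto simp: sum.delta)
qed

lemma L_tilde_eq_sketch:
  fixes l :: "nat \<Rightarrow> real"
  assumes L: "L \<in> carrier_mat n n" and \<sigma>: "set \<sigma> \<subseteq> {..<n}" and r: "0 \<le> r"
  defines "S \<equiv> sketch_mat l r n \<sigma>"
  shows "L_tilde L l r \<sigma> = S * L * transpose_mat S"
proof (rule eq_matI)
  fix a b assume "a < dim_row (S * L * transpose_mat S)" "b < dim_col (S * L * transpose_mat S)"
  then have a: "a < length \<sigma>" and b: "b < length \<sigma>"
    by (simp_all add: S_def sketch_mat_def)
  have SL: "S * L \<in> carrier_mat (length \<sigma>) n"
    unfolding S_def using sketch_mat_carrier L by (rule mult_carrier_mat)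
  have "sqrt (r * l (\<sigma> ! a)) * sqrt (r * l (\<sigma> ! b)) = sqrt (r * r) * sqrt (l (\<sigma> ! a) * l (\<sigma> ! b))"
    by (simp only: real_sqrt_mult[symmetric] ac_simps)
  moreover have "\<sigma> ! a < n" "\<sigma> ! b < n"
    using \<sigma> nth_mem[OF a] nth_mem[OF b] by auto
  ultimately show "L_tilde L l r \<sigma> $$ (a, b) = (S * L * transpose_mat S) $$ (a, b)"
    unfolding S_def using a b r
    by (simp add: mult_transpose_sketch_mat_index[OF SL[unfolded S_def] \<sigma>]
        sketch_mat_mult_index[OF L \<sigma>] L_tilde_def)
qed (simp_all add: S_def sketch_mat_def L_tilde_def)

lemma sketch_mat_gram:
  fixes \<sigma> :: "nat list"
  assumes l: "\<forall>j<n. 0 \<le> l j" and r: "0 \<le> r"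
  defines "S \<equiv> sketch_mat l r n \<sigma>"
  shows "transpose_mat S * S = Matrix.mat n n (\<lambda>(i, j). if i = j then real (count_list \<sigma> j) / (r * l j) else 0)"
proof (rule eq_matI)
  fix i j assume "i < dim_row (Matrix.mat n n (\<lambda>(i, j). if i = j then real (count_list \<sigma> j) / (r * l j) else 0))"
    "j < dim_col (Matrix.mat n n (\<lambda>(i, j). if i = j then real (count_list \<sigma> j) / (r * l j) else 0))"
  then have i: "i < n" and j: "j < n" by simp_all
  have sq: "1 / sqrt (r * l j) * (1 / sqrt (r * l j)) = 1 / (r * l j)"
    using l r j by simp
  have "(transpose_mat S * S) $$ (i, j)
      = (\<Sum>a<length \<sigma>. if i = j then (if \<sigma> ! a = j then 1 else 0) / (r * l j) else 0)"
    using i j sq by (auto simp: S_def sketch_mat_def scalar_prod_def atLeast0LessThan intro!: sum.cong)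
  then show "(transpose_mat S * S) $$ (i, j)
      = Matrix.mat n n (\<lambda>(i, j). if i = j then real (count_list \<sigma> j) / (r * l j) else 0) $$ (i, j)"
    using i j by (simp add: count_list_eq_sum_nth sum_divide_distrib)
qed (simp_all add: S_def sketch_mat_def)

lemma det_one_plus_L_tilde:
  assumes L: "L \<in> carrier_mat n n" and \<sigma>: "set \<sigma> \<subseteq> {..<n}"
    and l: "\<forall>j<n. 0 \<le> l j" and r: "0 \<le> r"
  shows "Determinant.det (1\<^sub>m (length \<sigma>) + \<alpha> \<cdot>\<^sub>m L_tilde L l r \<sigma>)
       = Determinant.det (Matrix.mat n n (\<lambda>(i, j).
           (if i = j then 1 else 0) + \<alpha> * L $$ (i, j) / (r * l j) * real (count_list \<sigma> j)))"
proof -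
  define S where "S = sketch_mat l r n \<sigma>"
  define V where "V = \<alpha> \<cdot>\<^sub>m (L * transpose_mat S)"
  have S: "S \<in> carrier_mat (length \<sigma>) n" and V: "V \<in> carrier_mat n (length \<sigma>)"
    using L by (simp_all add: S_def V_def sketch_mat_def)
  have LS: "L * transpose_mat S \<in> carrier_mat n (length \<sigma>)"
    using L S by simp
  have "\<alpha> \<cdot>\<^sub>m L_tilde L l r \<sigma> = S * V"
    using L S by (simp add: L_tilde_eq_sketch[OF L \<sigma> r] S_def[symmetric] V_def mult_smult_distrib[OF S LS])
  then have "Determinant.det (1\<^sub>m (length \<sigma>) + \<alpha> \<cdot>\<^sub>m L_tilde L l r \<sigma>) = Determinant.det (1\<^sub>m n + V * S)"
    using det_one_plus_mult_commute[OF S V] by simp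
  also have "V * S = \<alpha> \<cdot>\<^sub>m (L * (transpose_mat S * S))"
    using L S by (simp add: V_def mult_smult_assoc_mat[OF LS S])
  also have "transpose_mat S * S = Matrix.mat n n (\<lambda>(i, j). if i = j then real (count_list \<sigma> j) / (r * l j) else 0)"
    unfolding S_def by (rule sketch_mat_gram[OF l r])
  also have "1\<^sub>m n + \<alpha> \<cdot>\<^sub>m (L * \<dots>) = Matrix.mat n n (\<lambda>(i, j).
           (if i = j then 1 else 0) + \<alpha> * L $$ (i, j) / (r * l j) * real (count_list \<sigma> j))"
  proof (rule eq_matI)
    fix i j assume "i < dim_row (Matrix.mat n n (\<lambda>(i, j).
           (if i = j then 1 else 0) + \<alpha> * L $$ (i, j) / (r * l j) * real (count_list \<sigma> j)))"
      "j < dim_col (Matrix.mat n n (\<lambda>(i, j).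
           (if i = j then 1 else 0) + \<alpha> * L $$ (i, j) / (r * l j) * real (count_list \<sigma> j)))"
    then have i: "i < n" and j: "j < n" by simp_all
    have "(\<Sum>k = 0..<n. L $$ (i, k) * (if k = j then real (count_list \<sigma> j) / (r * l j) else 0))
        = L $$ (i, j) * real (count_list \<sigma> j) / (r * l j)"
      using j by (simp add: if_distrib[of "\<lambda>u. L $$ (i, _) * u"] sum.delta' cong: if_cong)
    then show "(1\<^sub>m n + \<alpha> \<cdot>\<^sub>m (L * Matrix.mat n n (\<lambda>(i, j). if i = j then real (count_list \<sigma> j) / (r * l j) else 0))) $$ (i, j)
        = Matrix.mat n n (\<lambda>(i, j). (if i = j then 1 else 0) + \<alpha> * L $$ (i, j) / (r * l j) * real (count_list \<sigma> j)) $$ (i, j)"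
      using L i j by (simp add: scalar_prod_def)
  qed (use L in simp_all)
  finally show ?thesis .
qed

lemma pmf_of_list_upt:
  fixes f :: "nat \<Rightarrow> real"
  assumes f: "\<forall>i<n. 0 \<le> f i" and d: "d = (\<Sum>i<n. f i)" "0 < d"
  defines "q \<equiv> pmf_of_list (map (\<lambda>i. (i, f i / d)) [0..<n])"
  shows "set_pmf q \<subseteq> {..<n}" and "\<forall>i<n. pmf q i = f i / d"
proof -
  have wf: "pmf_of_list_wf (map (\<lambda>i. (i, f i / d)) [0..<n])"
  proof (rule pmf_of_list_wfI)
    show "sum_list (map snd (map (\<lambda>i. (i, f i / d)) [0..<n])) = 1"
      using d by (simp add: interv_sum_list_conv_sum_set_nat o_def atLeast0LessThan sum_divide_distrib[symmetric])
  qed (use f d in auto)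
  show "set_pmf q \<subseteq> {..<n}"
    using set_pmf_of_list[OF wf] by (auto simp: q_def)
  show "\<forall>i<n. pmf q i = f i / d"
  proof (intro allI impI)
    fix i assume i: "i < n"
    have "filter (\<lambda>j. j = i) [0..<n] = [i]"
      using i by (induction n) auto
    then show "pmf q i = f i / d"
      unfolding q_def pmf_pmf_of_list[OF wf] by (simp add: filter_map o_def)
  qed
qed

lemma expectation_poisson_then_iid_det_L_tilde:
  fixes q :: "nat pmf" and L :: "real mat"
  assumes L: "L \<in> carrier_mat n n" and l: "\<forall>j<n. 0 < l j" and r: "0 < r" and lam: "0 < lam"
    and q: "set_pmf q \<subseteq> {..<n}" and pmf_q: "\<forall>j<n. lam * exp (- 1 / r) * pmf q j = r * l j"
  shows "measure_pmf.expectation (poisson_then_iid lam q)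
           (\<lambda>(t, \<sigma>). exp (- real t / r) * Determinant.det (1\<^sub>m t + \<alpha> \<cdot>\<^sub>m L_tilde L l r \<sigma>))
         = exp (lam * exp (- 1 / r) - lam) * Determinant.det (1\<^sub>m n + \<alpha> \<cdot>\<^sub>m L)"
proof -
  let ?A = "{0..<n}" and ?z = "exp (- 1 / r)"
  obtain g where g: "\<And>x. Determinant.det (Matrix.mat n n (\<lambda>(i, j).
      (if i = j then 1 else 0) + \<alpha> * L $$ (i, j) / (r * l j) * x j))
      = (\<Sum>X\<in>Pow ?A. g X * (\<Prod>j\<in>?A - X. x j))"
    using det_affine_columns_multiaffine[where a = "\<lambda>i j. if i = j then 1 else 0"
        and b = "\<lambda>i j. \<alpha> * L $$ (i, j) / (r * l j)"] by blast
  have integrand: "(\<lambda>(t, \<sigma>). exp (- real t / r) * Determinant.det (1\<^sub>m t + \<alpha> \<cdot>\<^sub>m L_tilde L l r \<sigma>)) x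
      = (\<lambda>(t, \<sigma>). ?z ^ t * (\<Sum>X\<in>Pow ?A. g X * (\<Prod>j\<in>?A - X. real (count_list \<sigma> j)))) x"
    if "x \<in> set_pmf (poisson_then_iid lam q)" for x
  proof -
    obtain t \<sigma> where x: "x = (t, \<sigma>)"
      by (cases x)
    have t: "length \<sigma> = t" and \<sigma>: "set \<sigma> \<subseteq> {..<n}"
      using that q unfolding x by (auto simp: poisson_then_iid_def set_replicate_pmf)
    have z_pow: "exp (- real t / r) = ?z ^ t"
      by (simp flip: exp_of_nat_mult)
    have "Determinant.det (1\<^sub>m t + \<alpha> \<cdot>\<^sub>m L_tilde L l r \<sigma>)
        = Determinant.det (Matrix.mat n n (\<lambda>(i, j).
            (if i = j then 1 else 0) + \<alpha> * L $$ (i, j) / (r * l j) * real (count_list \<sigma> j)))"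
      using det_one_plus_L_tilde[OF L \<sigma>, of l r \<alpha>] l r t by (simp add: less_imp_le)
    also have "\<dots> = (\<Sum>X\<in>Pow ?A. g X * (\<Prod>j\<in>?A - X. real (count_list \<sigma> j)))"
      by (rule g)
    finally show ?thesis
      using z_pow by (simp add: x)
  qed
  have "measure_pmf.expectation (poisson_then_iid lam q)
      (\<lambda>(t, \<sigma>). exp (- real t / r) * Determinant.det (1\<^sub>m t + \<alpha> \<cdot>\<^sub>m L_tilde L l r \<sigma>))
      = measure_pmf.expectation (poisson_then_iid lam q)
      (\<lambda>(t, \<sigma>). ?z ^ t * (\<Sum>X\<in>Pow ?A. g X * (\<Prod>j\<in>?A - X. real (count_list \<sigma> j))))"
    using integrand by (intro integral_cong_AE) (simp_all add: AE_measure_pmf_iff)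
  also have "\<dots> = exp (lam * ?z - lam) * (\<Sum>X\<in>Pow ?A. g X * (\<Prod>j\<in>?A - X. lam * ?z * pmf q j))"
    using lam by (intro expectation_poisson_then_iid_multiaffine) auto
  also have "\<dots> = exp (lam * ?z - lam) * (\<Sum>X\<in>Pow ?A. g X * (\<Prod>j\<in>?A - X. r * l j))"
    using pmf_q by (auto intro!: sum.cong prod.cong arg_cong2[where f = "(*)"])
  also have "(\<Sum>X\<in>Pow ?A. g X * (\<Prod>j\<in>?A - X. r * l j)) = Determinant.det (1\<^sub>m n + \<alpha> \<cdot>\<^sub>m L)"
    unfolding g[symmetric] using L l r by (intro arg_cong[where f = Determinant.det] eq_matI) auto
  finally show ?thesis .
qed

theorem mainTheorem7:
  fixes n :: nat and L :: "real mat" and D :: "nat list" and w :: "real list"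
    and \<alpha> r :: real
  assumes n_pos: "n \<ge> 1"
    and L_psd: "psd_mat n L"
    and D_range: "\<forall>j \<in> set D. j < n"
    and w_len: "length w = length D"
    and w_pos: "\<forall>x \<in> set w. 0 < x"
    and alpha_pos: "\<alpha> > 0"
    and r_ge: "r \<ge> 1"
    and l_pos: "\<forall>i < n. approx_marginal L D w \<alpha> i > 0"
  defines "l \<equiv> approx_marginal L D w \<alpha>"
    and "Lh \<equiv> L_hat L D w"
    and "s \<equiv> d_eff (\<alpha> \<cdot>\<^sub>m L_hat L D w)"
    and "d \<equiv> (\<Sum>i < n. approx_marginal L D w \<alpha> i)"
  shows "measure_pmf.expectation
           (poisson_then_iid (r * exp (1 / r) * d)
              (pmf_of_list (map (\<lambda>i. (i, l i / d)) [0..<n])))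
           (\<lambda>(t, \<sigma>). exp s * Determinant.det (1\<^sub>m t + \<alpha> \<cdot>\<^sub>m L_tilde L l r \<sigma>)
                       / (exp (real t / r) * Determinant.det (1\<^sub>m (length D) + \<alpha> \<cdot>\<^sub>m Lh)))
         = exp (s + r * d - r * exp (1 / r) * d)
             * Determinant.det (1\<^sub>m n + \<alpha> \<cdot>\<^sub>m L) / Determinant.det (1\<^sub>m (length D) + \<alpha> \<cdot>\<^sub>m Lh)"
proof -
  let ?q = "pmf_of_list (map (\<lambda>i. (i, l i / d)) [0..<n])" and ?lam = "r * exp (1 / r) * d"
  let ?H = "Determinant.det (1\<^sub>m (length D) + \<alpha> \<cdot>\<^sub>m Lh)"
  have r: "0 < r" and L: "L \<in> carrier_mat n n" and l: "\<forall>i<n. 0 < l i"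
    using r_ge L_psd l_pos by (simp_all add: psd_mat_def l_def)
  have d: "d = (\<Sum>i<n. l i)" and d_pos: "0 < d"
    using n_pos l by (auto simp: d_def l_def lessThan_empty_iff intro!: sum_pos)
  have q_set: "set_pmf ?q \<subseteq> {..<n}" and q_pmf: "\<forall>i<n. pmf ?q i = l i / d"
    using pmf_of_list_upt[of n l d] l d d_pos by (auto simp: less_imp_le)
  have lam_z: "?lam * exp (- 1 / r) = r * d"
    by (simp add: mult_ac flip: exp_add)
  have expectation_det: "measure_pmf.expectation (poisson_then_iid ?lam ?q)
      (\<lambda>(t, \<sigma>). exp (- real t / r) * Determinant.det (1\<^sub>m t + \<alpha> \<cdot>\<^sub>m L_tilde L l r \<sigma>))
      = exp (r * d - ?lam) * Determinant.det (1\<^sub>m n + \<alpha> \<cdot>\<^sub>m L)"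
    using expectation_poisson_then_iid_det_L_tilde[OF L l r _ q_set] lam_z q_pmf d_pos r
    by simp
  have "(\<lambda>(t, \<sigma>). exp s * Determinant.det (1\<^sub>m t + \<alpha> \<cdot>\<^sub>m L_tilde L l r \<sigma>) / (exp (real t / r) * ?H))
      = (\<lambda>x. exp s / ?H * (case x of (t, \<sigma>) \<Rightarrow> exp (- real t / r) * Determinant.det (1\<^sub>m t + \<alpha> \<cdot>\<^sub>m L_tilde L l r \<sigma>)))"
    by (auto simp: exp_minus field_simps)
  then have "measure_pmf.expectation (poisson_then_iid ?lam ?q)
      (\<lambda>(t, \<sigma>). exp s * Determinant.det (1\<^sub>m t + \<alpha> \<cdot>\<^sub>m L_tilde L l r \<sigma>) / (exp (real t / r) * ?H))
      = exp s / ?H * (exp (r * d - ?lam) * Determinant.det (1\<^sub>m n + \<alpha> \<cdot>\<^sub>m L))"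
    by (simp only: integral_mult_right_zero expectation_det)
  then show ?thesis
    by (simp add: exp_add exp_diff mult_ac)
qed

end
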